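(* In the IM-OCP setting described in the context, for any initialization $r_1\in[0,B]$, any positive step sizes $(\eta_t)_{t\ge1}$, and any realization of the feedback indicators $(\mathrm{obs}_t)_{t\ge1}$, the iterates satisfy, for every $t>1$, $$r_t\in\left[-\frac{\alpha\,\varpi_t}{\mu},\; B+\frac{(1-\alpha)\,\varpi_t}{\mu}\right],\qquad \varpi_t=\max_{i\in\{1,\dots,t-1\}}\frac{\eta_i}{p_i}.$$
   Context: Fix $\alpha\in(0,1)$ and $B>0$. Let $(r_t^* )_{t\ge1}$ be an arbitrary deterministic sequence of scores with $r_t^*\in[0,B]$ (the score $r_t^*=s(X_t,Y_t)$ of the true label; the prediction set at time $t$ is $\{y: s(X_t,y)\le r_t\}$). Given thresholds $r_t$, the miscoverage indicator is $E_t=\mathbb{1}\{r_t^*>r_t\}$. The quantile loss is $\ell_{1-\alpha}(r,r^* )=(\alpha-\mathbb{1}\{r<r^*\})(r-r^* )$. Let $P$ be a probability distribution on $[0,B]$ with bounded density, $\sigma>0$, and $R(r)=\mathbb{E}_{r^*\sim P}[\ell_{1-\alpha}(r,r^* )]+\frac{\sigma}{2}r^2$; $R$ is differentiable and $\nabla R$ is a continuous strictly increasing bijection of $\mathbb{R}$. Let $\mu>0$ be a constant such that $R$ is $\mu$-strongly convex (e.g. $\mu=\sigma$). Feedback: $p_t\in(0,1]$ and $(\mathrm{obs}_t)_{t\ge1}$ are independent Bernoulli random variables with $\Pr(\mathrm{obs}_t=1)=p_t$. IM-OCP: given $r_1$ and step sizes $\eta_t>0$, for $t\ge2$ the threshold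 $r_t$ is defined by $$\nabla R(r_t)=\nabla R(r_{t-1})-\eta_{t-1}(\alpha-E_{t-1})\frac{\mathrm{obs}_{t-1}}{p_{t-1}},$$ i.e. $r_t=(\nabla R)^{-1}\big(\nabla R(r_{t-1})-\eta_{t-1}(\alpha-E_{t-1})\mathrm{obs}_{t-1}/p_{t-1}\big)$. *)

theory Defs
  imports "HOL-Probability.Probability"
begin

definition qloss :: "real \<Rightarrow> real \<Rightarrow> real \<Rightarrow> real" where
  "qloss \<alpha> r rs = (\<alpha> - (if r < rs then 1 else 0)) * (r - rs)"

definition Rfun :: "real \<Rightarrow> real measure \<Rightarrow> real \<Rightarrow> real \<Rightarrow> real" where
  "Rfun \<alpha> P \<sigma> r = (\<integral> rs. qloss \<alpha> r rs \<partial>P) + \<sigma> / 2 * r\<^sup>2"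

definition strongly_convex :: "real \<Rightarrow> (real \<Rightarrow> real) \<Rightarrow> bool" where
  "strongly_convex \<mu> R \<longleftrightarrow> convex_on UNIV (\<lambda>x. R x - \<mu> / 2 * x\<^sup>2)"

definition miscov :: "real \<Rightarrow> real \<Rightarrow> real" where
  "miscov rs r = (if rs > r then 1 else 0)"

end

theory Submission
  imports Defs
begin

text \<open>Writing \<open>g = \<nabla>R\<close>, strong convexity makes \<open>g\<close> grow at rate at least \<open>\<mu>\<close>, so a change
  of at most \<open>d\<close> in \<open>g(r\<^sub>t)\<close> moves \<open>r\<^sub>t\<close> by at most \<open>d/\<mu>\<close>. One update changes \<open>g(r\<^sub>t)\<close> by
  \<open>v(\<alpha> - E\<^sub>t)\<close> with \<open>0 \<le> v \<le> \<eta>\<^sub>t/p\<^sub>t\<close>. Below \<open>0\<close> every true score is missed, so \<open>g(r\<^sub>t)\<close>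
  and hence \<open>r\<^sub>t\<close> can only increase; from \<open>r\<^sub>t \<ge> 0\<close> a single step goes down by at most
  \<open>\<alpha> \<eta>\<^sub>t/(p\<^sub>t \<mu>)\<close>. Symmetrically above \<open>B\<close> nothing is missed and \<open>r\<^sub>t\<close> cannot increase,
  while from \<open>r\<^sub>t \<le> B\<close> a step goes up by at most \<open>(1 - \<alpha>) \<eta>\<^sub>t/(p\<^sub>t \<mu>)\<close>.
  Only differentiability and strong convexity of \<open>R\<close> are used: the assumptions on \<open>P\<close> and the
  bijectivity of \<open>\<nabla>R\<close> merely guarantee that the iterates exist.\<close>

lemma strongly_convex_deriv_growth:
  fixes R :: "real \<Rightarrow> real"
  assumes diff: "\<And>x. R differentiable (at x)"
    and sc: "strongly_convex \<mu> R"
    and "x \<le> y"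
  shows "\<mu> * (y - x) \<le> deriv R y - deriv R x"
proof -
  let ?h = "\<lambda>x. R x - \<mu> / 2 * x\<^sup>2"
  have convex: "convex_on UNIV ?h"
    using sc by (simp add: strongly_convex_def)
  have h_deriv: "(?h has_field_derivative (deriv R z - \<mu> * z)) (at z within UNIV)" for z
  proof -
    have "(R has_real_derivative deriv R z) (at z)"
      using diff DERIV_deriv_iff_real_differentiable by blast
    then show ?thesis by (auto intro!: derivative_eq_intros)
  qed
  have "?h y - ?h x \<ge> (deriv R x - \<mu> * x) * (y - x)"
    by (rule convex_on_imp_above_tangent[OF convex _ _ _ h_deriv]) auto
  moreover have "?h x - ?h y \<ge> (deriv R y - \<mu> * y) * (x - y)"
    by (rule convex_on_imp_above_tangent[OF convex _ _ _ h_deriv]) auto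
  ultimately have "0 \<le> (deriv R y - \<mu> * y - (deriv R x - \<mu> * x)) * (y - x)"
    by (simp add: algebra_simps)
  with \<open>x \<le> y\<close> have "x = y \<or> 0 \<le> deriv R y - \<mu> * y - (deriv R x - \<mu> * x)"
    by (smt (verit) mult_less_0_iff)
  then show ?thesis
    by (auto simp: algebra_simps)
qed

lemma diff_le_divide_of_growth:
  fixes g :: "real \<Rightarrow> real"
  assumes growth: "\<And>x y. x \<le> y \<Longrightarrow> \<mu> * (y - x) \<le> g y - g x"
    and "0 < \<mu>" and "g a - g b \<le> d" and "0 \<le> d"
  shows "a - b \<le> d / \<mu>"
proof (cases "b \<le> a")
  case True
  then have "\<mu> * (a - b) \<le> d"
    using growth[of b a] \<open>g a - g b \<le> d\<close> by linarith
  then show ?thesis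
    using \<open>0 < \<mu>\<close> by (simp add: field_simps)
next
  case False
  moreover have "0 \<le> d / \<mu>"
    using \<open>0 < \<mu>\<close> \<open>0 \<le> d\<close> by simp
  ultimately show ?thesis by linarith
qed

lemma update_lower_bound:
  fixes g :: "real \<Rightarrow> real"
  assumes growth: "\<And>x y. x \<le> y \<Longrightarrow> \<mu> * (y - x) \<le> g y - g x"
    and "0 < \<mu>" and "0 \<le> \<alpha>" and "\<alpha> \<le> 1" and "0 \<le> s"
    and "0 \<le> v" and "v \<le> c"
    and update: "g b = g a - v * (\<alpha> - miscov s a)"
    and lower: "- \<alpha> * c / \<mu> \<le> a"
  shows "- \<alpha> * c / \<mu> \<le> b"
proof (cases "a < 0")
  case True
  with \<open>0 \<le> s\<close> have "g a - g b = - v * (1 - \<alpha>)"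
    using update by (simp add: miscov_def algebra_simps)
  also have "\<dots> \<le> 0"
    using \<open>0 \<le> v\<close> \<open>\<alpha> \<le> 1\<close> by simp
  finally have "a - b \<le> 0 / \<mu>"
    using diff_le_divide_of_growth[OF growth \<open>0 < \<mu>\<close>] by blast
  with lower show ?thesis by simp
next
  case False
  have "g a - g b = v * (\<alpha> - miscov s a)"
    using update by simp
  also have "\<dots> \<le> v * \<alpha>"
    using \<open>0 \<le> v\<close> by (simp add: miscov_def mult_left_mono)
  also have "\<dots> \<le> c * \<alpha>"
    using \<open>v \<le> c\<close> \<open>0 \<le> \<alpha>\<close> by (rule mult_right_mono)
  finally have "a - b \<le> c * \<alpha> / \<mu>"
    using diff_le_divide_of_growth[OF growth \<open>0 < \<mu>\<close>] \<open>0 \<le> v\<close> \<open>v \<le> c\<close> \<open>0 \<le> \<alpha>\<close> by simp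
  with False show ?thesis
    by (simp add: field_simps)
qed

lemma update_upper_bound:
  fixes g :: "real \<Rightarrow> real"
  assumes growth: "\<And>x y. x \<le> y \<Longrightarrow> \<mu> * (y - x) \<le> g y - g x"
    and "0 < \<mu>" and "0 \<le> \<alpha>" and "\<alpha> \<le> 1" and "s \<le> B"
    and "0 \<le> v" and "v \<le> c"
    and update: "g b = g a - v * (\<alpha> - miscov s a)"
    and upper: "a \<le> B + (1 - \<alpha>) * c / \<mu>"
  shows "b \<le> B + (1 - \<alpha>) * c / \<mu>"
proof (cases "B < a")
  case True
  with \<open>s \<le> B\<close> have "g b - g a = - v * \<alpha>"
    using update by (simp add: miscov_def)
  also have "\<dots> \<le> 0"
    using \<open>0 \<le> v\<close> \<open>0 \<le> \<alpha>\<close> by simp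
  finally have "b - a \<le> 0 / \<mu>"
    using diff_le_divide_of_growth[OF growth \<open>0 < \<mu>\<close>] by blast
  with upper show ?thesis by simp
next
  case False
  have "g b - g a = v * (miscov s a - \<alpha>)"
    using update by (simp add: algebra_simps)
  also have "\<dots> \<le> v * (1 - \<alpha>)"
    using \<open>0 \<le> v\<close> by (simp add: miscov_def mult_left_mono)
  also have "\<dots> \<le> c * (1 - \<alpha>)"
    using \<open>v \<le> c\<close> \<open>\<alpha> \<le> 1\<close> by (simp add: mult_right_mono)
  finally have "b - a \<le> c * (1 - \<alpha>) / \<mu>"
    using diff_le_divide_of_growth[OF growth \<open>0 < \<mu>\<close>] \<open>0 \<le> v\<close> \<open>v \<le> c\<close> \<open>\<alpha> \<le> 1\<close> by simp
  with False show ?thesis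
    by (simp add: field_simps)
qed

lemma iterates_in_band:
  fixes g :: "real \<Rightarrow> real" and r s v :: "nat \<Rightarrow> real"
  assumes growth: "\<And>x y. x \<le> y \<Longrightarrow> \<mu> * (y - x) \<le> g y - g x"
    and "0 < \<mu>" and "0 \<le> \<alpha>" and "\<alpha> \<le> 1" and "0 \<le> c"
    and s: "\<And>i. 1 \<le> i \<Longrightarrow> s i \<in> {0..B}"
    and v: "\<And>i. 1 \<le> i \<Longrightarrow> i < T \<Longrightarrow> 0 \<le> v i \<and> v i \<le> c"
    and update: "\<And>i. 1 \<le> i \<Longrightarrow> g (r (Suc i)) = g (r i) - v i * (\<alpha> - miscov (s i) (r i))"
    and r1: "r 1 \<in> {0..B}"
    and "1 \<le> t" and "t \<le> T"
  shows "- \<alpha> * c / \<mu> \<le> r t \<and> r t \<le> B + (1 - \<alpha>) * c / \<mu>"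
  using \<open>1 \<le> t\<close> \<open>t \<le> T\<close>
proof (induction t rule: nat_induct_at_least)
  case base
  have "- \<alpha> * c / \<mu> \<le> 0" and "0 \<le> (1 - \<alpha>) * c / \<mu>"
    using \<open>0 < \<mu>\<close> \<open>0 \<le> \<alpha>\<close> \<open>\<alpha> \<le> 1\<close> \<open>0 \<le> c\<close> by (simp_all add: divide_nonpos_pos)
  with r1 show ?case by auto
next
  case (Suc i)
  then have "0 \<le> v i" "v i \<le> c" and s_i: "0 \<le> s i" "s i \<le> B"
    using v[of i] s[of i] by auto
  with Suc show ?case
    using update_lower_bound[OF growth \<open>0 < \<mu>\<close> \<open>0 \<le> \<alpha>\<close> \<open>\<alpha> \<le> 1\<close> s_i(1) _ _ update]
      update_upper_bound[OF growth \<open>0 < \<mu>\<close> \<open>0 \<le> \<alpha>\<close> \<open>\<alpha> \<le> 1\<close> s_i(2) _ _ update]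
    by simp
qed

theorem lemma1:
  fixes \<alpha> B \<sigma> \<mu> :: real
    and P :: "real measure" and f :: "real \<Rightarrow> real" and M :: real
    and rstar :: "nat \<Rightarrow> real" and r :: "nat \<Rightarrow> real"
    and \<eta> :: "nat \<Rightarrow> real" and p :: "nat \<Rightarrow> real" and obs :: "nat \<Rightarrow> bool"
  assumes alpha: "0 < \<alpha>" "\<alpha> < 1"
    and B: "0 < B"
    and rstar: "\<And>t. t \<ge> 1 \<Longrightarrow> rstar t \<in> {0..B}"
    and P_density: "P = density lborel (\<lambda>x. ennreal (f x))"
    and f_meas: "f \<in> borel_measurable borel"
    and f_bounded: "\<And>x. 0 \<le> f x \<and> f x \<le> M"
    and f_supp: "\<And>x. x \<notin> {0..B} \<Longrightarrow> f x = 0"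
    and P_prob: "prob_space P"
    and sigma: "0 < \<sigma>"
    and R_diff: "\<And>x. Rfun \<alpha> P \<sigma> differentiable (at x)"
    and gradR_cont: "continuous_on UNIV (deriv (Rfun \<alpha> P \<sigma>))"
    and gradR_mono: "strict_mono (deriv (Rfun \<alpha> P \<sigma>))"
    and gradR_bij: "bij (deriv (Rfun \<alpha> P \<sigma>))"
    and mu: "0 < \<mu>" "strongly_convex \<mu> (Rfun \<alpha> P \<sigma>)"
    and p: "\<And>t. t \<ge> 1 \<Longrightarrow> 0 < p t \<and> p t \<le> 1"
    and eta: "\<And>t. t \<ge> 1 \<Longrightarrow> 0 < \<eta> t"
    and r1: "r 1 \<in> {0..B}"
    and update: "\<And>t. t \<ge> 2 \<Longrightarrow>
        deriv (Rfun \<alpha> P \<sigma>) (r t) =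
          deriv (Rfun \<alpha> P \<sigma>) (r (t - 1))
          - \<eta> (t - 1) * (\<alpha> - miscov (rstar (t - 1)) (r (t - 1)))
            * (if obs (t - 1) then 1 else 0) / p (t - 1)"
  shows "\<forall>t > 1.
           - \<alpha> * Max ((\<lambda>i. \<eta> i / p i) ` {1..t - 1}) / \<mu> \<le> r t \<and>
           r t \<le> B + (1 - \<alpha>) * Max ((\<lambda>i. \<eta> i / p i) ` {1..t - 1}) / \<mu>"
proof (intro allI impI)
  fix t :: nat
  assume "t > 1"
  define c where "c = Max ((\<lambda>i. \<eta> i / p i) ` {1..t - 1})"
  define v where "v i = \<eta> i * (if obs i then 1 else 0) / p i" for i
  have c_ge: "\<eta> i / p i \<le> c" if "1 \<le> i" "i < t" for i
    unfolding c_def using that by (intro Max_ge) auto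
  have "0 < \<eta> 1 / p 1"
    using eta[of 1] p[of 1] by simp
  then have "0 \<le> c"
    using c_ge[of 1] \<open>t > 1\<close> by linarith
  have v_bounds: "0 \<le> v i \<and> v i \<le> c" if "1 \<le> i" "i < t" for i
    using eta[of i] p[of i] c_ge[OF that] that \<open>0 \<le> c\<close> by (auto simp: v_def)
  have growth: "\<mu> * (y - x) \<le> deriv (Rfun \<alpha> P \<sigma>) y - deriv (Rfun \<alpha> P \<sigma>) x" if "x \<le> y" for x y
    using strongly_convex_deriv_growth[OF R_diff mu(2) that] .
  have "deriv (Rfun \<alpha> P \<sigma>) (r (Suc i)) =
      deriv (Rfun \<alpha> P \<sigma>) (r i) - v i * (\<alpha> - miscov (rstar i) (r i))" if "1 \<le> i" for i
    using update[of "Suc i"] that by (simp add: v_def)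
  from iterates_in_band[OF growth mu(1) _ _ \<open>0 \<le> c\<close> rstar v_bounds this r1, of t]
  show "- \<alpha> * Max ((\<lambda>i. \<eta> i / p i) ` {1..t - 1}) / \<mu> \<le> r t \<and>
      r t \<le> B + (1 - \<alpha>) * Max ((\<lambda>i. \<eta> i / p i) ` {1..t - 1}) / \<mu>"
    using alpha \<open>t > 1\<close> by (simp add: c_def)
qed

end
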